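(* Let $\tau>0$, $\mathcal C=C([-\tau,0];\mathbb R^n)$, and let $f:\mathcal C\to\mathbb R^n$, $g:\mathcal C\to\mathbb R^{n\times d}$ satisfy (A2): there are constants $p\ge2$, $\varrho>0$, $a_1,a_2,a_3>0$ with $a_2>a_3$ and $\rho_1\in\mathcal W$ such that for all $\phi\in\mathcal C$ $$2\phi(0)^Tf(\phi)+(p-1)|g(\phi)|^2\le a_1\Big(1+|\phi(0)|^2+\frac1\tau\int_{-\tau}^0|\phi(\theta)|^2\mathrm d\theta\Big)-a_2|\phi(0)|^{2+\varrho}+a_3\int_{-\tau}^0|\phi(\theta)|^{2+\varrho}\rho_1(\theta)\mathrm d\theta.$$ Let $\varepsilon_0\in(0,1)$ satisfy $\frac{a_2+a_3}{2}<a_2(1-\varepsilon_0)^{p/2}$, let $\kappa\in(0,1)$ satisfy $\frac{(a_2+a_3)(1+\kappa)}{2}<a_2(1-\varepsilon_0)^{p/2}$, let $\Phi(\phi)=1+(1-\varepsilon_0)|\phi(0)|^2+\frac{\varepsilon_0}{\tau}\int_{-\tau}^0|\phi(\theta)|^2\mathrm d\theta$, and set $$\alpha_1=\frac p2\Big(a_2(1-\varepsilon_0)^{p/2}-(1+\kappa)(1-\varepsilon_0)\Big(\frac{a_3(p-2)}{p+\varrho}+\frac{a_2-a_3}{2}\Big)\Big),\quad \alpha_2=\frac{p(1+\kappa)\varepsilon_0}{2}\Big(\frac{a_3(p-2)}{p+\varrho}+\frac{a_2-a_3}{2}\Big),\quad\alpha_3=\frac{a_3p(2+\varrho)}{2(p+\varrho)}.$$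 Then $0<\alpha_2+\alpha_3<\alpha_1$, and for every $c>0$ there is a constant $L>0$ such that for all $\phi\in\mathcal C$ $$c\,\Phi(\phi)^{p/2}+\frac{(1-\varepsilon_0)p}{2}\Phi(\phi)^{\frac{p-2}{2}}\big(2\phi(0)^Tf(\phi)+(p-1)|g(\phi)|^2\big)\le L-\alpha_1|\phi(0)|^{p+\varrho}+\frac{\alpha_2}{\tau}\int_{-\tau}^0|\phi(\theta)|^{p+\varrho}\mathrm d\theta+\alpha_3\int_{-\tau}^0|\phi(\theta)|^{p+\varrho}\rho_1(\theta)\mathrm d\theta.$$
   Context: $|\cdot|$ is the Euclidean norm on $\mathbb R^n$ and the trace (Frobenius) norm on $\mathbb R^{n\times d}$. $\mathcal W$ is the set of bounded Borel measurable functions $\rho:[-\tau,0]\to[0,\infty)$ with $\int_{-\tau}^0\rho(\theta)\mathrm d\theta=1$. *)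

theory Defs
  imports "HOL-Analysis.Analysis"
begin

definition weightW :: "real \<Rightarrow> (real \<Rightarrow> real) set" where
  "weightW \<tau> = {\<rho>. set_borel_measurable borel {-\<tau>..0} \<rho>
      \<and> bounded (\<rho> ` {-\<tau>..0})
      \<and> (\<forall>\<theta>\<in>{-\<tau>..0}. 0 \<le> \<rho> \<theta>)
      \<and> \<rho> integrable_on {-\<tau>..0}
      \<and> integral {-\<tau>..0} \<rho> = 1}"

definition phase_space :: "real \<Rightarrow> (real \<Rightarrow> real ^ 'n) set" where
  "phase_space \<tau> = {\<phi>. continuous_on {-\<tau>..0} \<phi>}"

end

theory Submission
  imports Defs
begin

(* Write F = Phi(phi) and vr for the exponent varrho.  By (A2) the drift term
   F^((p-2)/2) (2 phi(0)^T f + (p-1)|g|^2) splits into three kinds of terms, each compared with the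
   top power F^((p+vr)/2):
   - F^((p-2)/2) (1 + |phi(0)|^2 + mean |phi|^2) is at most a multiple of F^(p/2); this lower power,
     together with c F^(p/2), is absorbed into a small multiple of F^((p+vr)/2) plus a constant;
   - F^((p-2)/2) |phi(0)|^(2+vr) is at least (1-eps0)^((p-2)/2) |phi(0)|^(p+vr): the good term;
   - Young's inequality with exponents (p+vr)/(p-2) and (p+vr)/(2+vr), integrated against rho1, bounds
     F^((p-2)/2) |phi|^(2+vr) by (p-2)/(p+vr) F^((p+vr)/2) + (2+vr)/(p+vr) |phi|^(p+vr): this gives alpha3.
   The collected coefficient of F^((p+vr)/2) is at most p/2 B, B = a3 (p-2)/(p+vr) + (a2-a3)/2, and
   convexity of t^((p+vr)/2) with Jensen's inequality for the mean gives
   F^((p+vr)/2) <= (1+kappa) ((1-eps0) |phi(0)|^(p+vr) + eps0 mean |phi|^(p+vr)) + C,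
   which produces alpha1 and alpha2.  As B + a3 (2+vr)/(p+vr) = (a2+a3)/2, the choice of kappa
   gives alpha2 + alpha3 < alpha1. *)

lemma powr_tangent_line_le:
  fixes u M q :: real
  assumes "0 \<le> u" "0 \<le> M" "1 \<le> q"
  shows "q * M powr (q - 1) * u - (q - 1) * M powr q \<le> u powr q"
proof (cases "M = 0 \<or> u = 0 \<or> q = 1")
  case True
  then show ?thesis
    using assms by auto
next
  case False
  then have M: "0 < M" and u: "0 < u" and q: "1 < q"
    using assms by auto
  have "(M powr q) powr ((q - 1) / q) * (u powr q) powr (1 / q)
      \<le> (q - 1) / q * M powr q + 1 / q * u powr q"
    using M u q by (intro Youngs_inequality_0) (auto simp: field_simps)
  then have "M powr (q - 1) * u \<le> (q - 1) / q * M powr q + 1 / q * u powr q"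
    using q u by (simp add: powr_powr)
  then have "q * (M powr (q - 1) * u) \<le> (q - 1) * M powr q + u powr q"
    using q by (simp add: field_simps)
  then show ?thesis
    by (simp add: algebra_simps)
qed

lemma powr_tangent_line_at:
  fixes M q :: real
  assumes "0 \<le> M"
  shows "q * M powr (q - 1) * M - (q - 1) * M powr q = M powr q"
proof -
  have "M powr (q - 1) * M = M powr q"
    using powr_mult_base[OF assms, of "q - 1"] by (simp add: mult.commute)
  then show ?thesis
    by (simp add: algebra_simps)
qed

lemma mult_powr_half_minus_one:
  fixes x p :: real
  assumes "0 \<le> x"
  shows "x * x powr ((p - 2) / 2) = x powr (p / 2)"
proof -
  have "1 + (p - 2) / 2 = p / 2"
    by (simp add: field_simps)
  then show ?thesis
    using powr_mult_base[OF assms, of "(p - 2) / 2"] by (simp only:)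
qed

lemma power2_powr_half:
  fixes x r :: real
  assumes "0 \<le> x"
  shows "(x\<^sup>2) powr (r / 2) = x powr r"
  using powr_powr[of x 2 "r / 2"] assms by simp

lemma powr_convex_combination_le:
  fixes u v l q :: real
  assumes "0 \<le> u" "0 \<le> v" "0 \<le> l" "l \<le> 1" "1 \<le> q"
  shows "(l * u + (1 - l) * v) powr q \<le> l * u powr q + (1 - l) * v powr q"
proof -
  define M where "M = l * u + (1 - l) * v"
  have "0 \<le> M"
    using assms by (simp add: M_def)
  have "M powr q = l * (q * M powr (q - 1) * u - (q - 1) * M powr q)
      + (1 - l) * (q * M powr (q - 1) * v - (q - 1) * M powr q)"
    using powr_tangent_line_at[OF \<open>0 \<le> M\<close>, of q] by (simp add: M_def algebra_simps)
  also have "\<dots> \<le> l * u powr q + (1 - l) * v powr q"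
    using assms \<open>0 \<le> M\<close> by (intro add_mono mult_left_mono powr_tangent_line_le) auto
  finally show ?thesis
    by (simp add: M_def)
qed

lemma powr_mult_powr_le_Young:
  fixes F u s t :: real
  assumes "0 \<le> F" "0 \<le> u" "0 \<le> s" "0 < t"
  shows "F powr (s / 2) * u powr t
    \<le> s / (s + t) * F powr ((s + t) / 2) + t / (s + t) * u powr (s + t)"
proof -
  have "(s + t) / 2 * (s / (s + t)) = s / 2" "(s + t) * (t / (s + t)) = t"
    using assms by (simp_all add: field_simps)
  then have "(F powr ((s + t) / 2)) powr (s / (s + t)) = F powr (s / 2)"
    "(u powr (s + t)) powr (t / (s + t)) = u powr t"
    by (simp_all only: powr_powr)
  moreover have "(F powr ((s + t) / 2)) powr (s / (s + t)) * (u powr (s + t)) powr (t / (s + t))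
      \<le> s / (s + t) * F powr ((s + t) / 2) + t / (s + t) * u powr (s + t)"
  proof (cases "F = 0 \<or> u = 0")
    case False
    have "s / (s + t) + t / (s + t) = 1"
      using assms by (simp add: add_divide_distrib [symmetric])
    then show ?thesis
      using assms False by (intro Youngs_inequality_0) auto
  qed (use assms in auto)
  ultimately show ?thesis
    by simp
qed

lemma powr_le_small_multiple_plus_const:
  fixes K d a b :: real
  assumes "0 \<le> K" "0 < d" "0 \<le> a" "a < b"
  obtains C where "0 \<le> C" "\<And>F. 0 \<le> F \<Longrightarrow> K * F powr a \<le> d * F powr b + C"
proof
  define R where "R = (K / d) powr (1 / (b - a))"
  show "0 \<le> K * R powr a"
    using assms by simp
  fix F :: real
  assume "0 \<le> F"
  show "K * F powr a \<le> d * F powr b + K * R powr a"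
  proof (cases "F \<le> R")
    case True
    then have "K * F powr a \<le> K * R powr a"
      using assms \<open>0 \<le> F\<close> by (intro mult_left_mono powr_mono2) auto
    then show ?thesis
      using assms by (simp add: add_increasing)
  next
    case False
    then have "R powr (b - a) \<le> F powr (b - a)"
      using assms by (intro powr_mono2) (auto simp: R_def)
    then have "K \<le> d * F powr (b - a)"
      using assms by (simp add: R_def powr_powr field_simps)
    then have "K * F powr a \<le> d * F powr (b - a) * F powr a"
      by (simp add: mult_right_mono)
    also have "\<dots> = d * F powr b"
      by (simp add: mult.assoc flip: powr_add)
    finally show ?thesis
      using assms by (simp add: add_increasing2)
  qed
qed

lemma one_plus_powr_le:
  fixes q k :: real
  assumes "1 < q" "0 < k"
  obtains C where "0 \<le> C" "\<And>Z. 0 \<le> Z \<Longrightarrow> (1 + Z) powr q \<le> (1 + k) * Z powr q + C"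
proof
  define l where "l = (1 + k) powr (- 1 / (q - 1))"
  have "0 < l" "l < 1"
    using assms unfolding l_def by (auto intro: powr_less_one simp: field_simps)
  have "- 1 / (q - 1) * (1 - q) = 1"
    using assms by (simp add: field_simps)
  then have "l powr (1 - q) = 1 + k"
    using assms by (simp add: l_def powr_powr)
  define C where "C = (1 - l) * (1 / (1 - l)) powr q"
  show "0 \<le> C"
    using \<open>l < 1\<close> by (simp add: C_def)
  fix Z :: real
  assume "0 \<le> Z"
  \<comment> \<open>convexity applied to 1 + Z = l * (Z / l) + (1 - l) * (1 / (1 - l)), where l was chosen
    so that the factor l powr (1 - q) in front of Z powr q becomes 1 + k\<close>
  have "(1 + Z) powr q = (l * (Z / l) + (1 - l) * (1 / (1 - l))) powr q"
    using \<open>0 < l\<close> \<open>l < 1\<close> by (simp add: add.commute)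
  also have "\<dots> \<le> l * (Z / l) powr q + C"
    using \<open>0 \<le> Z\<close> \<open>0 < l\<close> \<open>l < 1\<close> assms unfolding C_def
    by (intro powr_convex_combination_le) auto
  also have "l * (Z / l) powr q = l powr (1 - q) * Z powr q"
    using \<open>0 < l\<close> \<open>0 \<le> Z\<close> by (simp add: powr_divide powr_diff field_simps)
  finally show "(1 + Z) powr q \<le> (1 + k) * Z powr q + C"
    using \<open>l powr (1 - q) = 1 + k\<close> by simp
qed

lemma weightW_integrable_product:
  fixes h \<rho> :: "real \<Rightarrow> real" and \<tau> :: real
  assumes "\<rho> \<in> weightW \<tau>" "continuous_on {-\<tau>..0} h"
  shows "(\<lambda>\<theta>. h \<theta> * \<rho> \<theta>) integrable_on {-\<tau>..0}"
proof -
  have "(\<lambda>\<theta>. h \<theta> * \<rho> \<theta>) absolutely_integrable_on {-\<tau>..0}"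
  proof (rule absolutely_integrable_bounded_measurable_product_real)
    show "h \<in> borel_measurable (lebesgue_on {-\<tau>..0})"
      using assms(2) by (intro continuous_imp_measurable_on_sets_lebesgue) auto
    show "bounded (h ` {-\<tau>..0})"
      using assms(2) by (intro compact_imp_bounded compact_continuous_image) auto
    show "\<rho> absolutely_integrable_on {-\<tau>..0}"
      using assms(1) by (intro nonnegative_absolutely_integrable_1) (auto simp: weightW_def)
  qed simp
  then show ?thesis
    by (simp add: absolutely_integrable_on_def)
qed

lemma powr_mean_le_mean_powr:
  fixes h :: "real \<Rightarrow> real" and a b q :: real
  assumes "a < b" "1 \<le> q" "continuous_on {a..b} h" "\<And>x. x \<in> {a..b} \<Longrightarrow> 0 \<le> h x"
  shows "(integral {a..b} h / (b - a)) powr q \<le> integral {a..b} (\<lambda>x. h x powr q) / (b - a)"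
proof -
  define M where "M = integral {a..b} h / (b - a)"
  have "h integrable_on {a..b}"
    using assms(3) by (rule integrable_continuous_interval)
  then have "0 \<le> M"
    using assms unfolding M_def by (intro divide_nonneg_pos integral_nonneg) auto
  have "(\<lambda>x. h x powr q) integrable_on {a..b}"
    using assms by (intro integrable_continuous_interval continuous_on_powr') auto
  have "(b - a) * M powr q = (b - a) * (q * M powr (q - 1) * M - (q - 1) * M powr q)"
    using powr_tangent_line_at[OF \<open>0 \<le> M\<close>] by simp
  also have "\<dots> = q * M powr (q - 1) * integral {a..b} h - (b - a) * ((q - 1) * M powr q)"
    using assms(1) by (simp add: M_def right_diff_distrib)
  also have "\<dots> = integral {a..b} (\<lambda>x. q * M powr (q - 1) * h x - (q - 1) * M powr q)"
    using \<open>h integrable_on {a..b}\<close> assms(1)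
    by (subst integral_diff) (auto intro: integrable_on_mult_right)
  also have "\<dots> \<le> integral {a..b} (\<lambda>x. h x powr q)"
    using \<open>h integrable_on {a..b}\<close> \<open>(\<lambda>x. h x powr q) integrable_on {a..b}\<close> \<open>0 \<le> M\<close> assms
    by (intro integral_le integrable_diff integrable_on_mult_right powr_tangent_line_le) auto
  finally show ?thesis
    using assms(1) by (simp add: M_def field_simps)
qed

lemma mixed_second_moment_powr_le:
  fixes \<phi> :: "real \<Rightarrow> 'a::real_normed_vector" and \<tau> q e :: real
  assumes "0 < \<tau>" "1 \<le> q" "0 \<le> e" "e \<le> 1" "continuous_on {-\<tau>..0} \<phi>"
  shows "((1 - e) * (norm (\<phi> 0))\<^sup>2 + e / \<tau> * integral {-\<tau>..0} (\<lambda>\<theta>. (norm (\<phi> \<theta>))\<^sup>2)) powr q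
    \<le> (1 - e) * norm (\<phi> 0) powr (2 * q) + e / \<tau> * integral {-\<tau>..0} (\<lambda>\<theta>. norm (\<phi> \<theta>) powr (2 * q))"
proof -
  have sq_powr: "((norm v)\<^sup>2) powr q = norm v powr (2 * q)" for v :: 'a
    using powr_powr[of "norm v" 2 q] by simp
  have mean: "(integral {-\<tau>..0} (\<lambda>\<theta>. (norm (\<phi> \<theta>))\<^sup>2) / \<tau>) powr q
      \<le> integral {-\<tau>..0} (\<lambda>\<theta>. norm (\<phi> \<theta>) powr (2 * q)) / \<tau>"
    using powr_mean_le_mean_powr[of "-\<tau>" 0 q "\<lambda>\<theta>. (norm (\<phi> \<theta>))\<^sup>2"] assms
    by (simp add: sq_powr continuous_intros)
  have "((1 - e) * (norm (\<phi> 0))\<^sup>2 + e / \<tau> * integral {-\<tau>..0} (\<lambda>\<theta>. (norm (\<phi> \<theta>))\<^sup>2)) powr q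
      \<le> (1 - e) * ((norm (\<phi> 0))\<^sup>2) powr q
        + e * (integral {-\<tau>..0} (\<lambda>\<theta>. (norm (\<phi> \<theta>))\<^sup>2) / \<tau>) powr q"
    using powr_convex_combination_le[of "(norm (\<phi> 0))\<^sup>2"
        "integral {-\<tau>..0} (\<lambda>\<theta>. (norm (\<phi> \<theta>))\<^sup>2) / \<tau>" "1 - e" q] assms
    by (simp add: integral_nonneg integrable_continuous_interval continuous_intros)
  also have "\<dots> \<le> (1 - e) * norm (\<phi> 0) powr (2 * q)
      + e / \<tau> * integral {-\<tau>..0} (\<lambda>\<theta>. norm (\<phi> \<theta>) powr (2 * q))"
    using mult_left_mono[OF mean, of e] assms by (simp add: sq_powr)
  finally show ?thesis .
qed

lemma integral_weighted_Young:
  fixes h \<rho> :: "real \<Rightarrow> real" and \<tau> F s t :: real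
  assumes "\<rho> \<in> weightW \<tau>" "continuous_on {-\<tau>..0} h" "\<And>\<theta>. \<theta> \<in> {-\<tau>..0} \<Longrightarrow> 0 \<le> h \<theta>"
    and "0 \<le> F" "0 \<le> s" "0 < t"
  shows "F powr (s / 2) * integral {-\<tau>..0} (\<lambda>\<theta>. h \<theta> powr t * \<rho> \<theta>)
    \<le> s / (s + t) * F powr ((s + t) / 2) + t / (s + t) * integral {-\<tau>..0} (\<lambda>\<theta>. h \<theta> powr (s + t) * \<rho> \<theta>)"
proof -
  have \<rho>: "\<rho> integrable_on {-\<tau>..0}" "integral {-\<tau>..0} \<rho> = 1" "\<And>\<theta>. \<theta> \<in> {-\<tau>..0} \<Longrightarrow> 0 \<le> \<rho> \<theta>"
    using assms(1) by (auto simp: weightW_def)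
  have integrable: "(\<lambda>\<theta>. h \<theta> powr r * \<rho> \<theta>) integrable_on {-\<tau>..0}" if "0 < r" for r
    using assms that by (intro weightW_integrable_product continuous_on_powr') auto
  have "F powr (s / 2) * integral {-\<tau>..0} (\<lambda>\<theta>. h \<theta> powr t * \<rho> \<theta>)
      = integral {-\<tau>..0} (\<lambda>\<theta>. F powr (s / 2) * (h \<theta> powr t * \<rho> \<theta>))"
    by simp
  also have "\<dots> \<le> integral {-\<tau>..0}
      (\<lambda>\<theta>. s / (s + t) * F powr ((s + t) / 2) * \<rho> \<theta> + t / (s + t) * (h \<theta> powr (s + t) * \<rho> \<theta>))"
  proof (rule integral_le)
    fix \<theta> assume "\<theta> \<in> {-\<tau>..0}"
    then show "F powr (s / 2) * (h \<theta> powr t * \<rho> \<theta>)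
        \<le> s / (s + t) * F powr ((s + t) / 2) * \<rho> \<theta> + t / (s + t) * (h \<theta> powr (s + t) * \<rho> \<theta>)"
      using mult_right_mono[OF powr_mult_powr_le_Young[of F "h \<theta>" s t] \<rho>(3)] assms
      by (simp add: algebra_simps)
  qed (use \<rho>(1) integrable assms in \<open>auto intro!: integrable_add integrable_on_mult_right integrable_on_mult_left\<close>)
  also have "\<dots> = s / (s + t) * F powr ((s + t) / 2)
      + t / (s + t) * integral {-\<tau>..0} (\<lambda>\<theta>. h \<theta> powr (s + t) * \<rho> \<theta>)"
    using \<rho> assms by (subst integral_add) (auto intro: integrable_on_mult_right integrable)
  finally show ?thesis .
qed

definition lyap :: "real \<Rightarrow> real \<Rightarrow> (real \<Rightarrow> 'a::real_normed_vector) \<Rightarrow> real" where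
  "lyap \<tau> e \<phi> = 1 + (1 - e) * (norm (\<phi> 0))\<^sup>2 + e / \<tau> * integral {-\<tau>..0} (\<lambda>\<theta>. (norm (\<phi> \<theta>))\<^sup>2)"

lemma integral_norm_square_nonneg:
  fixes \<phi> :: "real \<Rightarrow> 'a::real_normed_vector" and \<tau> :: real
  assumes "continuous_on {-\<tau>..0} \<phi>"
  shows "0 \<le> integral {-\<tau>..0} (\<lambda>\<theta>. (norm (\<phi> \<theta>))\<^sup>2)"
  using assms by (intro integral_nonneg integrable_continuous_interval continuous_intros) auto

lemma one_le_lyap:
  fixes \<phi> :: "real \<Rightarrow> 'a::real_normed_vector" and \<tau> e :: real
  assumes "0 < \<tau>" "0 \<le> e" "e \<le> 1" "continuous_on {-\<tau>..0} \<phi>"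
  shows "1 \<le> lyap \<tau> e \<phi>"
  using assms integral_norm_square_nonneg[OF assms(4)] by (simp add: lyap_def)

lemma min_mult_second_moment_le_lyap:
  fixes \<phi> :: "real \<Rightarrow> 'a::real_normed_vector" and \<tau> e :: real
  assumes "0 < \<tau>" "0 \<le> e" "e \<le> 1" "continuous_on {-\<tau>..0} \<phi>"
  shows "min e (1 - e) * (1 + (norm (\<phi> 0))\<^sup>2 + 1 / \<tau> * integral {-\<tau>..0} (\<lambda>\<theta>. (norm (\<phi> \<theta>))\<^sup>2))
    \<le> lyap \<tau> e \<phi>"
proof -
  define I where "I = 1 / \<tau> * integral {-\<tau>..0} (\<lambda>\<theta>. (norm (\<phi> \<theta>))\<^sup>2)"
  have "0 \<le> I"
    using assms integral_norm_square_nonneg[OF assms(4)] by (simp add: I_def)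
  then have "min e (1 - e) * 1 \<le> 1" "min e (1 - e) * (norm (\<phi> 0))\<^sup>2 \<le> (1 - e) * (norm (\<phi> 0))\<^sup>2"
    "min e (1 - e) * I \<le> e * I"
    using assms by (auto intro: mult_right_mono)
  then show ?thesis
    by (simp add: lyap_def I_def distrib_left)
qed

lemma lyap_powr_le:
  fixes \<tau> r e k :: real
  assumes "0 < \<tau>" "2 < r" "0 \<le> e" "e \<le> 1" "0 < k"
  obtains C where "0 \<le> C"
    "\<And>\<phi> :: real \<Rightarrow> 'a::real_normed_vector. continuous_on {-\<tau>..0} \<phi> \<Longrightarrow>
      lyap \<tau> e \<phi> powr (r / 2) \<le> (1 + k) * ((1 - e) * norm (\<phi> 0) powr r
        + e / \<tau> * integral {-\<tau>..0} (\<lambda>\<theta>. norm (\<phi> \<theta>) powr r)) + C"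
proof -
  obtain C where "0 \<le> C" and C: "\<And>Z. 0 \<le> Z \<Longrightarrow> (1 + Z) powr (r / 2) \<le> (1 + k) * Z powr (r / 2) + C"
    using one_plus_powr_le[of "r / 2" k] assms by auto
  show ?thesis
  proof (rule that[OF \<open>0 \<le> C\<close>])
    fix \<phi> :: "real \<Rightarrow> 'a"
    assume \<phi>: "continuous_on {-\<tau>..0} \<phi>"
    define Z where "Z = (1 - e) * (norm (\<phi> 0))\<^sup>2 + e / \<tau> * integral {-\<tau>..0} (\<lambda>\<theta>. (norm (\<phi> \<theta>))\<^sup>2)"
    have "0 \<le> Z"
      using assms integral_norm_square_nonneg[OF \<phi>] by (simp add: Z_def)
    have "lyap \<tau> e \<phi> powr (r / 2) \<le> (1 + k) * Z powr (r / 2) + C"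
      using C[OF \<open>0 \<le> Z\<close>] by (simp add: lyap_def Z_def add.assoc)
    also have "\<dots> \<le> (1 + k) * ((1 - e) * norm (\<phi> 0) powr r
        + e / \<tau> * integral {-\<tau>..0} (\<lambda>\<theta>. norm (\<phi> \<theta>) powr r)) + C"
      using mixed_second_moment_powr_le[OF assms(1) _ assms(3,4) \<phi>, of "r / 2"] assms
      unfolding Z_def by (intro add_right_mono mult_left_mono) auto
    finally show "lyap \<tau> e \<phi> powr (r / 2) \<le> (1 + k) * ((1 - e) * norm (\<phi> 0) powr r
        + e / \<tau> * integral {-\<tau>..0} (\<lambda>\<theta>. norm (\<phi> \<theta>) powr r)) + C" .
  qed
qed

lemma lyap_powr_mult_second_moment_le:
  fixes \<phi> :: "real \<Rightarrow> 'a::real_normed_vector" and \<tau> e p :: real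
  assumes "0 < \<tau>" "0 < e" "e < 1" "continuous_on {-\<tau>..0} \<phi>"
  shows "lyap \<tau> e \<phi> powr ((p - 2) / 2) * (1 + (norm (\<phi> 0))\<^sup>2 + 1 / \<tau> * integral {-\<tau>..0} (\<lambda>\<theta>. (norm (\<phi> \<theta>))\<^sup>2))
    \<le> lyap \<tau> e \<phi> powr (p / 2) / min e (1 - e)"
proof -
  define F where "F = lyap \<tau> e \<phi>"
  have "0 < min e (1 - e)" "1 \<le> F"
    using assms one_le_lyap[OF assms(1) _ _ assms(4)] by (auto simp: F_def)
  then have "F powr ((p - 2) / 2) * (1 + (norm (\<phi> 0))\<^sup>2 + 1 / \<tau> * integral {-\<tau>..0} (\<lambda>\<theta>. (norm (\<phi> \<theta>))\<^sup>2))
      \<le> F powr ((p - 2) / 2) * (F / min e (1 - e))"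
    using min_mult_second_moment_le_lyap[OF assms(1) _ _ assms(4)] assms
    by (intro mult_left_mono) (auto simp: F_def field_simps)
  also have "\<dots> = F * F powr ((p - 2) / 2) / min e (1 - e)"
    by simp
  also have "F * F powr ((p - 2) / 2) = F powr (p / 2)"
    using mult_powr_half_minus_one[of F p] \<open>1 \<le> F\<close> by simp
  finally show ?thesis
    by (simp add: F_def)
qed

lemma lyap_powr_mult_norm_powr_ge:
  fixes \<phi> :: "real \<Rightarrow> 'a::real_normed_vector" and \<tau> e p r :: real
  assumes "0 < \<tau>" "0 \<le> e" "e \<le> 1" "2 \<le> p" "continuous_on {-\<tau>..0} \<phi>"
  shows "(1 - e) powr (p / 2) * norm (\<phi> 0) powr (p + r)
    \<le> (1 - e) * (lyap \<tau> e \<phi> powr ((p - 2) / 2) * norm (\<phi> 0) powr (2 + r))"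
proof -
  define x where "x = norm (\<phi> 0)"
  have "(1 - e) * x\<^sup>2 \<le> lyap \<tau> e \<phi>"
    using assms integral_norm_square_nonneg[OF assms(5)] by (simp add: x_def lyap_def)
  then have "((1 - e) * x\<^sup>2) powr ((p - 2) / 2) \<le> lyap \<tau> e \<phi> powr ((p - 2) / 2)"
    using assms by (intro powr_mono2) auto
  moreover have "((1 - e) * x\<^sup>2) powr ((p - 2) / 2) = (1 - e) powr ((p - 2) / 2) * x powr (p - 2)"
    using assms power2_powr_half[of x "p - 2"] by (simp add: x_def powr_mult)
  ultimately have "(1 - e) powr ((p - 2) / 2) * x powr (p - 2) * x powr (2 + r)
      \<le> lyap \<tau> e \<phi> powr ((p - 2) / 2) * x powr (2 + r)"
    by (simp add: mult_right_mono)
  then have "(1 - e) * ((1 - e) powr ((p - 2) / 2) * x powr (p + r))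
      \<le> (1 - e) * (lyap \<tau> e \<phi> powr ((p - 2) / 2) * x powr (2 + r))"
    using assms by (simp add: mult.assoc mult_left_mono flip: powr_add)
  then show ?thesis
    using mult_powr_half_minus_one[of "1 - e" p] assms by (simp add: x_def mult.assoc [symmetric])
qed

lemma lyap_powr_mult_drift_le:
  fixes \<phi> :: "real \<Rightarrow> 'a::real_normed_vector" and \<rho> :: "real \<Rightarrow> real"
    and \<tau> p vr a1 a2 a3 e s :: real
  assumes "0 < \<tau>" "2 \<le> p" "0 < vr" "0 \<le> a1" "0 \<le> a2" "0 \<le> a3" "\<rho> \<in> weightW \<tau>" "0 < e" "e < 1"
    and \<phi>: "continuous_on {-\<tau>..0} \<phi>"
    and s: "s \<le> a1 * (1 + (norm (\<phi> 0))\<^sup>2 + 1 / \<tau> * integral {-\<tau>..0} (\<lambda>\<theta>. (norm (\<phi> \<theta>))\<^sup>2))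
        - a2 * norm (\<phi> 0) powr (2 + vr) + a3 * integral {-\<tau>..0} (\<lambda>\<theta>. norm (\<phi> \<theta>) powr (2 + vr) * \<rho> \<theta>)"
  shows "(1 - e) * p / 2 * lyap \<tau> e \<phi> powr ((p - 2) / 2) * s
    \<le> p / 2 * (1 - e) * a1 * (lyap \<tau> e \<phi> powr (p / 2) / min e (1 - e))
      - p / 2 * a2 * ((1 - e) powr (p / 2) * norm (\<phi> 0) powr (p + vr))
      + p / 2 * a3 * ((p - 2) / (p + vr)) * lyap \<tau> e \<phi> powr ((p + vr) / 2)
      + p / 2 * a3 * ((2 + vr) / (p + vr)) * integral {-\<tau>..0} (\<lambda>\<theta>. norm (\<phi> \<theta>) powr (p + vr) * \<rho> \<theta>)"
proof -
  define F where "F = lyap \<tau> e \<phi>"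
  define G where "G = F powr ((p - 2) / 2)"
  define x where "x = norm (\<phi> 0)"
  define I2 where "I2 = 1 / \<tau> * integral {-\<tau>..0} (\<lambda>\<theta>. (norm (\<phi> \<theta>))\<^sup>2)"
  define Iq where "Iq = integral {-\<tau>..0} (\<lambda>\<theta>. norm (\<phi> \<theta>) powr (2 + vr) * \<rho> \<theta>)"
  define IP where "IP = integral {-\<tau>..0} (\<lambda>\<theta>. norm (\<phi> \<theta>) powr (p + vr) * \<rho> \<theta>)"
  have "1 \<le> F"
    using one_le_lyap[OF assms(1) _ _ \<phi>] assms by (simp add: F_def)
  have "0 \<le> IP"
    unfolding IP_def using assms \<phi>
    by (intro integral_nonneg weightW_integrable_product continuous_on_powr' continuous_intros)
      (auto simp: weightW_def)
  have young: "G * Iq \<le> (p - 2) / (p + vr) * F powr ((p + vr) / 2) + (2 + vr) / (p + vr) * IP"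
    using integral_weighted_Young[OF assms(7), of "\<lambda>\<theta>. norm (\<phi> \<theta>)" F "p - 2" "2 + vr"]
      \<phi> \<open>1 \<le> F\<close> assms
    by (simp add: G_def Iq_def IP_def continuous_on_norm)
  have "(1 - e) * p / 2 * G * s \<le> (1 - e) * p / 2 * G * (a1 * (1 + x\<^sup>2 + I2) - a2 * x powr (2 + vr) + a3 * Iq)"
    using s assms by (intro mult_left_mono) (auto simp: G_def x_def I2_def Iq_def)
  also have "\<dots> = p / 2 * (1 - e) * a1 * (G * (1 + x\<^sup>2 + I2))
      - p / 2 * a2 * ((1 - e) * (G * x powr (2 + vr))) + p / 2 * a3 * ((1 - e) * (G * Iq))"
    by (simp add: field_simps)
  also have "\<dots> \<le> p / 2 * (1 - e) * a1 * (F powr (p / 2) / min e (1 - e))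
      - p / 2 * a2 * ((1 - e) powr (p / 2) * x powr (p + vr))
      + p / 2 * a3 * ((1 - e) * ((p - 2) / (p + vr) * F powr ((p + vr) / 2) + (2 + vr) / (p + vr) * IP))"
    using lyap_powr_mult_second_moment_le[OF assms(1,8,9) \<phi>, of p]
      lyap_powr_mult_norm_powr_ge[OF assms(1) _ _ assms(2) \<phi>, of e vr] young assms
    unfolding F_def G_def x_def I2_def by (intro add_mono diff_mono mult_left_mono) auto
  also have "\<dots> \<le> p / 2 * (1 - e) * a1 * (F powr (p / 2) / min e (1 - e))
      - p / 2 * a2 * ((1 - e) powr (p / 2) * x powr (p + vr))
      + p / 2 * a3 * ((p - 2) / (p + vr) * F powr ((p + vr) / 2) + (2 + vr) / (p + vr) * IP)"
    using \<open>1 \<le> F\<close> \<open>0 \<le> IP\<close> assms by (intro add_left_mono mult_left_mono mult_left_le_one_le) auto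
  finally show ?thesis
    unfolding F_def G_def x_def IP_def by (simp only: distrib_left mult.assoc)
qed

lemma lyap_drift_absorbed:
  fixes S :: "(real \<Rightarrow> 'a::real_normed_vector) \<Rightarrow> real" and \<rho> :: "real \<Rightarrow> real"
    and \<tau> p vr a1 a2 a3 e c :: real
  assumes "0 < \<tau>" "2 \<le> p" "0 < vr" "0 \<le> a1" "0 \<le> a3" "a3 < a2" "\<rho> \<in> weightW \<tau>"
    and "0 < e" "e < 1" "0 < c"
    and S: "\<And>\<phi>. continuous_on {-\<tau>..0} \<phi> \<Longrightarrow>
      S \<phi> \<le> a1 * (1 + (norm (\<phi> 0))\<^sup>2 + 1 / \<tau> * integral {-\<tau>..0} (\<lambda>\<theta>. (norm (\<phi> \<theta>))\<^sup>2))
        - a2 * norm (\<phi> 0) powr (2 + vr) + a3 * integral {-\<tau>..0} (\<lambda>\<theta>. norm (\<phi> \<theta>) powr (2 + vr) * \<rho> \<theta>)"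
  defines "B \<equiv> a3 * (p - 2) / (p + vr) + (a2 - a3) / 2"
  obtains C where "0 \<le> C" "\<And>\<phi>. continuous_on {-\<tau>..0} \<phi> \<Longrightarrow>
    c * lyap \<tau> e \<phi> powr (p / 2) + (1 - e) * p / 2 * lyap \<tau> e \<phi> powr ((p - 2) / 2) * S \<phi>
    \<le> C + p / 2 * B * lyap \<tau> e \<phi> powr ((p + vr) / 2)
      - p / 2 * a2 * ((1 - e) powr (p / 2) * norm (\<phi> 0) powr (p + vr))
      + a3 * p * (2 + vr) / (2 * (p + vr)) * integral {-\<tau>..0} (\<lambda>\<theta>. norm (\<phi> \<theta>) powr (p + vr) * \<rho> \<theta>)"
proof -
  define K where "K = c + p / 2 * (1 - e) * a1 / min e (1 - e)"
  \<comment> \<open>d is what remains of p/2 * B after the Young term p/2 * a3 * (p - 2) / (p + vr);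
    it absorbs the lower power of lyap\<close>
  define d where "d = p / 2 * ((a2 - a3) / 2)"
  have "0 \<le> K" "0 < d" "0 \<le> p / 2" "p / 2 < (p + vr) / 2" "0 < p + vr" "0 \<le> a2"
    using assms by (auto simp: K_def d_def)
  then obtain C where "0 \<le> C" and C: "\<And>F. 0 \<le> F \<Longrightarrow> K * F powr (p / 2) \<le> d * F powr ((p + vr) / 2) + C"
    using powr_le_small_multiple_plus_const by metis
  have "p / 2 * a3 * ((p - 2) / (p + vr)) = p / 2 * B - d"
    using \<open>0 < p + vr\<close> by (simp add: B_def d_def field_simps)
  show ?thesis
  proof (rule that[OF \<open>0 \<le> C\<close>])
    fix \<phi> :: "real \<Rightarrow> 'a"
    assume \<phi>: "continuous_on {-\<tau>..0} \<phi>"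
    define F where "F = lyap \<tau> e \<phi>"
    have "0 \<le> F"
      using one_le_lyap[of \<tau> e \<phi>] \<phi> assms by (simp add: F_def)
    have "c * F powr (p / 2) + p / 2 * (1 - e) * a1 * (F powr (p / 2) / min e (1 - e))
        = K * F powr (p / 2)"
      by (simp add: K_def algebra_simps)
    moreover have "p / 2 * a3 * ((p - 2) / (p + vr)) * F powr ((p + vr) / 2)
        = p / 2 * B * F powr ((p + vr) / 2) - d * F powr ((p + vr) / 2)"
      using \<open>p / 2 * a3 * ((p - 2) / (p + vr)) = p / 2 * B - d\<close> by (simp add: left_diff_distrib)
    moreover have "p / 2 * a3 * ((2 + vr) / (p + vr)) * integral {-\<tau>..0} (\<lambda>\<theta>. norm (\<phi> \<theta>) powr (p + vr) * \<rho> \<theta>)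
        = a3 * p * (2 + vr) / (2 * (p + vr)) * integral {-\<tau>..0} (\<lambda>\<theta>. norm (\<phi> \<theta>) powr (p + vr) * \<rho> \<theta>)"
      by simp
    ultimately show "c * lyap \<tau> e \<phi> powr (p / 2) + (1 - e) * p / 2 * lyap \<tau> e \<phi> powr ((p - 2) / 2) * S \<phi>
      \<le> C + p / 2 * B * lyap \<tau> e \<phi> powr ((p + vr) / 2)
        - p / 2 * a2 * ((1 - e) powr (p / 2) * norm (\<phi> 0) powr (p + vr))
        + a3 * p * (2 + vr) / (2 * (p + vr)) * integral {-\<tau>..0} (\<lambda>\<theta>. norm (\<phi> \<theta>) powr (p + vr) * \<rho> \<theta>)"
      using lyap_powr_mult_drift_le[OF assms(1-4) \<open>0 \<le> a2\<close> assms(5,7-9) \<phi> S[OF \<phi>]] C[OF \<open>0 \<le> F\<close>]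
      unfolding F_def by linarith
  qed
qed

lemma lyap_drift_bound:
  fixes S :: "(real \<Rightarrow> 'a::real_normed_vector) \<Rightarrow> real" and \<rho> :: "real \<Rightarrow> real"
    and \<tau> p vr a1 a2 a3 e k c :: real
  assumes "0 < \<tau>" "2 \<le> p" "0 < vr" "0 \<le> a1" "0 \<le> a3" "a3 < a2" "\<rho> \<in> weightW \<tau>"
    and "0 < e" "e < 1" "0 < k" "0 < c"
    and S: "\<And>\<phi>. continuous_on {-\<tau>..0} \<phi> \<Longrightarrow>
      S \<phi> \<le> a1 * (1 + (norm (\<phi> 0))\<^sup>2 + 1 / \<tau> * integral {-\<tau>..0} (\<lambda>\<theta>. (norm (\<phi> \<theta>))\<^sup>2))
        - a2 * norm (\<phi> 0) powr (2 + vr) + a3 * integral {-\<tau>..0} (\<lambda>\<theta>. norm (\<phi> \<theta>) powr (2 + vr) * \<rho> \<theta>)"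
  defines "B \<equiv> a3 * (p - 2) / (p + vr) + (a2 - a3) / 2"
  shows "\<exists>L>0. \<forall>\<phi>. continuous_on {-\<tau>..0} \<phi> \<longrightarrow>
    c * lyap \<tau> e \<phi> powr (p / 2) + (1 - e) * p / 2 * lyap \<tau> e \<phi> powr ((p - 2) / 2) * S \<phi>
    \<le> L - p / 2 * (a2 * (1 - e) powr (p / 2) - (1 + k) * (1 - e) * B) * norm (\<phi> 0) powr (p + vr)
      + p * (1 + k) * e / 2 * B / \<tau> * integral {-\<tau>..0} (\<lambda>\<theta>. norm (\<phi> \<theta>) powr (p + vr))
      + a3 * p * (2 + vr) / (2 * (p + vr)) * integral {-\<tau>..0} (\<lambda>\<theta>. norm (\<phi> \<theta>) powr (p + vr) * \<rho> \<theta>)"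
proof -
  obtain C1 where "0 \<le> C1" and C1: "\<And>\<phi>. continuous_on {-\<tau>..0} \<phi> \<Longrightarrow>
    c * lyap \<tau> e \<phi> powr (p / 2) + (1 - e) * p / 2 * lyap \<tau> e \<phi> powr ((p - 2) / 2) * S \<phi>
    \<le> C1 + p / 2 * B * lyap \<tau> e \<phi> powr ((p + vr) / 2)
      - p / 2 * a2 * ((1 - e) powr (p / 2) * norm (\<phi> 0) powr (p + vr))
      + a3 * p * (2 + vr) / (2 * (p + vr)) * integral {-\<tau>..0} (\<lambda>\<theta>. norm (\<phi> \<theta>) powr (p + vr) * \<rho> \<theta>)"
    using lyap_drift_absorbed[OF assms(1-9,11) S] unfolding B_def by blast
  have "2 < p + vr" "0 \<le> e" "e \<le> 1"
    using assms by auto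
  then obtain C2 where "0 \<le> C2" and C2: "\<And>\<phi> :: real \<Rightarrow> 'a. continuous_on {-\<tau>..0} \<phi> \<Longrightarrow>
      lyap \<tau> e \<phi> powr ((p + vr) / 2) \<le> (1 + k) * ((1 - e) * norm (\<phi> 0) powr (p + vr)
        + e / \<tau> * integral {-\<tau>..0} (\<lambda>\<theta>. norm (\<phi> \<theta>) powr (p + vr))) + C2"
    using lyap_powr_le[OF assms(1) _ _ _ assms(10)] by metis
  have "0 < B"
    using assms by (simp add: B_def add_nonneg_pos)
  show ?thesis
  proof (intro exI[of _ "C1 + p / 2 * B * C2 + 1"] conjI allI impI)
    show "0 < C1 + p / 2 * B * C2 + 1"
      using \<open>0 \<le> C1\<close> \<open>0 \<le> C2\<close> \<open>0 < B\<close> assms by (simp add: add_nonneg_pos)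
    fix \<phi> :: "real \<Rightarrow> 'a"
    assume \<phi>: "continuous_on {-\<tau>..0} \<phi>"
    have "p / 2 * B * lyap \<tau> e \<phi> powr ((p + vr) / 2) \<le> p / 2 * B * ((1 + k) * ((1 - e) * norm (\<phi> 0) powr (p + vr)
        + e / \<tau> * integral {-\<tau>..0} (\<lambda>\<theta>. norm (\<phi> \<theta>) powr (p + vr))) + C2)"
      using C2[OF \<phi>] \<open>0 < B\<close> assms by (intro mult_left_mono) auto
    also have "\<dots> = p / 2 * B * C2 + p / 2 * B * (1 + k) * (1 - e) * norm (\<phi> 0) powr (p + vr)
        + p / 2 * B * (1 + k) * (e / \<tau> * integral {-\<tau>..0} (\<lambda>\<theta>. norm (\<phi> \<theta>) powr (p + vr)))"
      by (simp only: ring_distribs mult.assoc add_ac)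
    also have "p / 2 * B * (1 + k) * (e / \<tau> * integral {-\<tau>..0} (\<lambda>\<theta>. norm (\<phi> \<theta>) powr (p + vr)))
        = p * (1 + k) * e / 2 * B / \<tau> * integral {-\<tau>..0} (\<lambda>\<theta>. norm (\<phi> \<theta>) powr (p + vr))"
      by (simp add: field_simps)
    finally have "p / 2 * B * lyap \<tau> e \<phi> powr ((p + vr) / 2)
      \<le> p / 2 * B * C2 + p / 2 * B * (1 + k) * (1 - e) * norm (\<phi> 0) powr (p + vr)
        + p * (1 + k) * e / 2 * B / \<tau> * integral {-\<tau>..0} (\<lambda>\<theta>. norm (\<phi> \<theta>) powr (p + vr))" .
    moreover have "p / 2 * (a2 * (1 - e) powr (p / 2) - (1 + k) * (1 - e) * B) * norm (\<phi> 0) powr (p + vr)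
        = p / 2 * a2 * ((1 - e) powr (p / 2) * norm (\<phi> 0) powr (p + vr))
          - p / 2 * B * (1 + k) * (1 - e) * norm (\<phi> 0) powr (p + vr)"
      by (simp only: right_diff_distrib left_diff_distrib mult_ac)
    ultimately show "c * lyap \<tau> e \<phi> powr (p / 2) + (1 - e) * p / 2 * lyap \<tau> e \<phi> powr ((p - 2) / 2) * S \<phi>
      \<le> C1 + p / 2 * B * C2 + 1 - p / 2 * (a2 * (1 - e) powr (p / 2) - (1 + k) * (1 - e) * B) * norm (\<phi> 0) powr (p + vr)
        + p * (1 + k) * e / 2 * B / \<tau> * integral {-\<tau>..0} (\<lambda>\<theta>. norm (\<phi> \<theta>) powr (p + vr))
        + a3 * p * (2 + vr) / (2 * (p + vr)) * integral {-\<tau>..0} (\<lambda>\<theta>. norm (\<phi> \<theta>) powr (p + vr) * \<rho> \<theta>)"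
      using C1[OF \<phi>] by linarith
  qed
qed

lemma drift_coefficients_ordered:
  fixes p vr a2 a3 e k :: real
  assumes p: "2 \<le> p" and vr: "0 < vr" and a: "0 < a3" "a3 < a2" and e: "0 < e" and k: "0 < k"
    and gap: "(a2 + a3) * (1 + k) / 2 < a2 * (1 - e) powr (p / 2)"
  defines "B \<equiv> a3 * (p - 2) / (p + vr) + (a2 - a3) / 2"
  shows "0 < p * (1 + k) * e / 2 * B + a3 * p * (2 + vr) / (2 * (p + vr))"
    and "p * (1 + k) * e / 2 * B + a3 * p * (2 + vr) / (2 * (p + vr))
      < p / 2 * (a2 * (1 - e) powr (p / 2) - (1 + k) * (1 - e) * B)"
proof -
  define Q where "Q = a3 * (2 + vr) / (p + vr)"
  have "0 < B" "0 < Q"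
    using p vr a by (auto simp: B_def Q_def add_nonneg_pos)
  have "a3 * (p - 2) / (p + vr) + Q = a3 * (p + vr) / (p + vr)"
    by (simp add: Q_def algebra_simps flip: add_divide_distrib)
  then have "B + Q = (a2 + a3) / 2"
    using p vr by (simp add: B_def field_simps)
  have \<alpha>3: "a3 * p * (2 + vr) / (2 * (p + vr)) = p / 2 * Q"
    by (simp add: Q_def)
  show "0 < p * (1 + k) * e / 2 * B + a3 * p * (2 + vr) / (2 * (p + vr))"
    using \<open>0 < B\<close> \<open>0 < Q\<close> p e k unfolding \<alpha>3 by (simp add: add_pos_pos)
  have "(1 + k) * B + Q < (1 + k) * (B + Q)"
    using \<open>0 < Q\<close> k by (simp add: algebra_simps)
  also have "\<dots> < a2 * (1 - e) powr (p / 2)"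
    using gap unfolding \<open>B + Q = (a2 + a3) / 2\<close> by (simp add: mult.commute)
  finally have "(1 + k) * e * B + Q < a2 * (1 - e) powr (p / 2) - (1 + k) * (1 - e) * B"
    by (simp add: algebra_simps)
  then have "p / 2 * ((1 + k) * e * B + Q) < p / 2 * (a2 * (1 - e) powr (p / 2) - (1 + k) * (1 - e) * B)"
    using p by (intro mult_strict_left_mono) auto
  moreover have "p * (1 + k) * e / 2 * B + p / 2 * Q = p / 2 * ((1 + k) * e * B + Q)"
    by (simp add: field_simps)
  ultimately show "p * (1 + k) * e / 2 * B + a3 * p * (2 + vr) / (2 * (p + vr))
      < p / 2 * (a2 * (1 - e) powr (p / 2) - (1 + k) * (1 - e) * B)"
    unfolding \<alpha>3 by linarith
qed

theorem lemma3p2: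
  fixes \<tau> p vr a1 a2 a3 \<epsilon>0 \<kappa> :: real
    and f :: "(real \<Rightarrow> real ^ 'n) \<Rightarrow> real ^ 'n"
    and g :: "(real \<Rightarrow> real ^ 'n) \<Rightarrow> real ^ 'd ^ 'n"
    and \<rho>1 :: "real \<Rightarrow> real"
  assumes tau: "\<tau> > 0"
    and p: "p \<ge> 2" and rho: "vr > 0"
    and a: "a1 > 0" "a2 > 0" "a3 > 0" "a2 > a3"
    and W: "\<rho>1 \<in> weightW \<tau>"
    and A2: "\<And>\<phi>. \<phi> \<in> phase_space \<tau> \<Longrightarrow>
        2 * (\<phi> 0 \<bullet> f \<phi>) + (p - 1) * (norm (g \<phi>))\<^sup>2
        \<le> a1 * (1 + (norm (\<phi> 0))\<^sup>2 + (1 / \<tau>) * integral {-\<tau>..0} (\<lambda>\<theta>. (norm (\<phi> \<theta>))\<^sup>2))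
           - a2 * norm (\<phi> 0) powr (2 + vr)
           + a3 * integral {-\<tau>..0} (\<lambda>\<theta>. norm (\<phi> \<theta>) powr (2 + vr) * \<rho>1 \<theta>)"
    and eps: "0 < \<epsilon>0" "\<epsilon>0 < 1" "(a2 + a3) / 2 < a2 * (1 - \<epsilon>0) powr (p / 2)"
    and kap: "0 < \<kappa>" "\<kappa> < 1" "(a2 + a3) * (1 + \<kappa>) / 2 < a2 * (1 - \<epsilon>0) powr (p / 2)"
    and Phi_def: "\<Phi> \<equiv> (\<lambda>\<phi>::real \<Rightarrow> real ^ 'n. 1 + (1 - \<epsilon>0) * (norm (\<phi> 0))\<^sup>2
        + (\<epsilon>0 / \<tau>) * integral {-\<tau>..0} (\<lambda>\<theta>. (norm (\<phi> \<theta>))\<^sup>2))"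
    and alpha1_def: "\<alpha>1 \<equiv> p / 2 * (a2 * (1 - \<epsilon>0) powr (p / 2)
        - (1 + \<kappa>) * (1 - \<epsilon>0) * (a3 * (p - 2) / (p + vr) + (a2 - a3) / 2))"
    and alpha2_def: "\<alpha>2 \<equiv> p * (1 + \<kappa>) * \<epsilon>0 / 2 * (a3 * (p - 2) / (p + vr) + (a2 - a3) / 2)"
    and alpha3_def: "\<alpha>3 \<equiv> a3 * p * (2 + vr) / (2 * (p + vr))"
  shows "0 < \<alpha>2 + \<alpha>3 \<and> \<alpha>2 + \<alpha>3 < \<alpha>1 \<and>
    (\<forall>c>0. \<exists>L>0. \<forall>\<phi>\<in>phase_space \<tau>.
       c * \<Phi> \<phi> powr (p / 2)
       + (1 - \<epsilon>0) * p / 2 * \<Phi> \<phi> powr ((p - 2) / 2)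
         * (2 * (\<phi> 0 \<bullet> f \<phi>) + (p - 1) * (norm (g \<phi>))\<^sup>2)
       \<le> L - \<alpha>1 * norm (\<phi> 0) powr (p + vr)
         + \<alpha>2 / \<tau> * integral {-\<tau>..0} (\<lambda>\<theta>. norm (\<phi> \<theta>) powr (p + vr))
         + \<alpha>3 * integral {-\<tau>..0} (\<lambda>\<theta>. norm (\<phi> \<theta>) powr (p + vr) * \<rho>1 \<theta>))"
proof -
  have "0 < \<alpha>2 + \<alpha>3" "\<alpha>2 + \<alpha>3 < \<alpha>1"
    using drift_coefficients_ordered[OF p rho a(3,4) eps(1) kap(1,3)]
    unfolding alpha1_def alpha2_def alpha3_def by simp_all
  moreover have "\<exists>L>0. \<forall>\<phi>\<in>phase_space \<tau>.
       c * \<Phi> \<phi> powr (p / 2)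
       + (1 - \<epsilon>0) * p / 2 * \<Phi> \<phi> powr ((p - 2) / 2)
         * (2 * (\<phi> 0 \<bullet> f \<phi>) + (p - 1) * (norm (g \<phi>))\<^sup>2)
       \<le> L - \<alpha>1 * norm (\<phi> 0) powr (p + vr)
         + \<alpha>2 / \<tau> * integral {-\<tau>..0} (\<lambda>\<theta>. norm (\<phi> \<theta>) powr (p + vr))
         + \<alpha>3 * integral {-\<tau>..0} (\<lambda>\<theta>. norm (\<phi> \<theta>) powr (p + vr) * \<rho>1 \<theta>)"
    if "0 < c" for c
    using lyap_drift_bound[OF tau p rho less_imp_le[OF a(1)] less_imp_le[OF a(3)] a(4) W eps(1,2) kap(1) that,
        of "\<lambda>\<phi>. 2 * (\<phi> 0 \<bullet> f \<phi>) + (p - 1) * (norm (g \<phi>))\<^sup>2"] A2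
    unfolding Phi_def alpha1_def alpha2_def alpha3_def phase_space_def lyap_def by auto
  ultimately show ?thesis
    by blast
qed

end
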